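(* Let $(a_i)_{i\ge0}$ be integers with $a_0=0$, $a_1=2$, $a_{2k}=4$ for all $k\geq1$, and $a_{2k+1}$ arbitrary positive integers for $k\ge1$. Let $\ell=[a_0;a_1,a_2,\dots]$ (an irrational number) and $\theta=e^{2/\ell}$. Then $\mathcal A_\theta$ is infinite. In particular, for every positive integer $c$, if $\theta=e^{4-c+\sqrt{c(c+1)}}$ then $\mathcal A_\theta$ is infinite.
   Context: $\lfloor x\rfloor$ is the floor of $x$; $\log$ is the natural logarithm. For real $\theta>1$ and positive integer $n$, $M'_\theta(n)=\left\lfloor 1/(\theta^{1/n}-1)\right\rfloor$, and $\mathcal A_\theta=\{n\in\mathbb N: M'_\theta(n)\neq \lfloor n/\log\theta-1/2\rfloor\}$, where $\mathbb N$ is the set of positive integers. $[a_0;a_1,a_2,\dots]$ denotes an infinite simple continued fraction. *)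

theory Defs
  imports Complex_Main
begin

fun cfrac_fin :: "(nat \<Rightarrow> int) \<Rightarrow> nat \<Rightarrow> real" where
  "cfrac_fin a 0 = of_int (a 0)"
| "cfrac_fin a (Suc n) = of_int (a 0) + 1 / cfrac_fin (\<lambda>i. a (Suc i)) n"

definition cfrac_val :: "(nat \<Rightarrow> int) \<Rightarrow> real" where
  "cfrac_val a = lim (\<lambda>n. cfrac_fin a n)"

definition Mprime :: "real \<Rightarrow> nat \<Rightarrow> int" where
  "Mprime \<theta> n = \<lfloor>1 / (\<theta> powr (1 / real n) - 1)\<rfloor>"

definition A_set :: "real \<Rightarrow> nat set" where
  "A_set \<theta> = {n. n \<ge> 1 \<and> Mprime \<theta> n \<noteq> \<lfloor>real n / ln \<theta> - 1/2\<rfloor>}"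

end

theory Submission
  imports Defs "HOL-Library.Infinite_Set"
begin

(*
  Write L = [0; 2, 4, a_3, 4, a_5, ...] and \<theta> = exp (2/L), so that
  n / ln \<theta> = n L / 2.  If n L lies just below an odd integer 2m+1, say
  n L = 2m + 1 - \<delta> with 0 < \<delta> < 1/(4n), then \<lfloor>n L/2 - 1/2\<rfloor> = m - 1, while the
  expansion 1/(e^x - 1) \<ge> 1/x - 1/2 + x/32 (at x = 2/(nL)) gives M'_\<theta>(n) \<ge> m;
  hence n \<in> A_\<theta>.  Such n are supplied by the continued fraction: for odd k the
  convergent p_k/q_k lies above L with p_k - q_k L < 1/q_{k+1} = 1/(4 q_k + q_{k-1}),
  and p_k is odd because every even-indexed partial quotient is even.  Since q_k
  grows without bound, A_\<theta> is infinite.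

  For the second
  claim, the periodic sequence with odd-indexed quotients c has a value computed
  from a quadratic fixed-point equation, giving 2/L = 4 - c + sqrt (c (c + 1)).
*)

(* Continuants: conv_num a (Suc n) / conv_den a (Suc n) is the n-th convergent
   [a 0; a 1, ..., a n]; index 0 holds the conventional values p_{-1} = 1, q_{-1} = 0. *)

fun conv_num :: "(nat \<Rightarrow> int) \<Rightarrow> nat \<Rightarrow> int" where
  "conv_num a 0 = 1"
| "conv_num a (Suc 0) = a 0"
| "conv_num a (Suc (Suc n)) = a (Suc n) * conv_num a (Suc n) + conv_num a n"

fun conv_den :: "(nat \<Rightarrow> int) \<Rightarrow> nat \<Rightarrow> int" where
  "conv_den a 0 = 0"
| "conv_den a (Suc 0) = 1"
| "conv_den a (Suc (Suc n)) = a (Suc n) * conv_den a (Suc n) + conv_den a n"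

declare conv_num.simps(3)[simp del] conv_den.simps(3)[simp del]

lemma conv_den_shift: "conv_den a (Suc n) = conv_num (\<lambda>i. a (Suc i)) n"
proof -
  have "conv_den a (Suc n) = conv_num (\<lambda>i. a (Suc i)) n \<and>
        conv_den a (Suc (Suc n)) = conv_num (\<lambda>i. a (Suc i)) (Suc n)"
    by (induction n) (auto simp: conv_num.simps(3) conv_den.simps(3))
  then show ?thesis ..
qed

lemma conv_num_shift:
  "conv_num a (Suc n) = a 0 * conv_num (\<lambda>i. a (Suc i)) n + conv_den (\<lambda>i. a (Suc i)) n"
proof -
  let ?b = "\<lambda>i. a (Suc i)"
  have "conv_num a (Suc n) = a 0 * conv_num ?b n + conv_den ?b n \<and>
        conv_num a (Suc (Suc n)) = a 0 * conv_num ?b (Suc n) + conv_den ?b (Suc n)"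
  proof (induction n)
    case (Suc n)
    have "conv_num a (Suc (Suc (Suc n))) = a (Suc (Suc n)) * conv_num a (Suc (Suc n)) + conv_num a (Suc n)"
      by (rule conv_num.simps(3))
    also have "\<dots> = a 0 * conv_num ?b (Suc (Suc n)) + conv_den ?b (Suc (Suc n))"
      using Suc conv_num.simps(3)[of ?b n] conv_den.simps(3)[of ?b n] by (simp add: algebra_simps)
    finally show ?case using Suc by simp
  qed (simp add: conv_num.simps(3))
  then show ?thesis ..
qed

lemma conv_det: "conv_num a (Suc n) * conv_den a n - conv_num a n * conv_den a (Suc n) = (-1) ^ Suc n"
  by (induction n) (auto simp: algebra_simps conv_num.simps(3) conv_den.simps(3))

lemma conv_den_pos:
  assumes pos: "\<forall>i\<ge>1. a i \<ge> 1"
  shows "0 \<le> conv_den a n" and "1 \<le> conv_den a (Suc n)"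
proof -
  have "0 \<le> conv_den a n \<and> 1 \<le> conv_den a (Suc n)"
  proof (induction n)
    case (Suc n)
    have "1 * 1 \<le> a (Suc n) * conv_den a (Suc n)"
      using Suc pos[rule_format, of "Suc n"] by (intro mult_mono) auto
    then show ?case using Suc by (simp add: conv_den.simps(3))
  qed simp
  then show "0 \<le> conv_den a n" "1 \<le> conv_den a (Suc n)" by auto
qed

lemma conv_den_grows:
  assumes pos: "\<forall>i\<ge>1. a i \<ge> 1"
  shows "conv_den a (Suc n) + conv_den a n \<le> conv_den a (Suc (Suc n))"
proof -
  have "1 * conv_den a (Suc n) \<le> a (Suc n) * conv_den a (Suc n)"
    using pos conv_den_pos[OF pos, of "Suc n"] by (intro mult_right_mono) auto
  then show ?thesis by (simp add: conv_den.simps(3))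
qed

lemma conv_den_ge_index:
  assumes pos: "\<forall>i\<ge>1. a i \<ge> 1"
  shows "int n \<le> conv_den a (Suc n)"
proof (induction n)
  case (Suc n)
  show ?case
  proof (cases n)
    case 0 then show ?thesis using conv_den_pos(2)[OF pos, of 1] by simp
  next
    case (Suc m)
    then have "1 \<le> conv_den a n" using conv_den_pos(2)[OF pos, of m] by simp
    then show ?thesis using Suc.IH conv_den_grows[OF pos, of n] by simp
  qed
qed simp

lemma cfrac_fin_conv:
  assumes pos: "\<forall>i\<ge>1. a i \<ge> 1"
  shows "cfrac_fin a n = conv_num a (Suc n) / conv_den a (Suc n)"
  using pos
proof (induction n arbitrary: a)
  case (Suc n)
  let ?b = "\<lambda>i. a (Suc i)"
  have posb: "\<forall>i\<ge>1. ?b i \<ge> 1" using Suc.prems by auto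
  have nz: "real_of_int (conv_num ?b (Suc n)) \<noteq> 0"
    using conv_den_pos(2)[OF Suc.prems, of "Suc n"] by (simp add: conv_den_shift)
  have "cfrac_fin a (Suc n) = a 0 + conv_den ?b (Suc n) / conv_num ?b (Suc n)"
    using Suc.IH[OF posb] by simp
  also have "\<dots> = (a 0 * conv_num ?b (Suc n) + conv_den ?b (Suc n)) / conv_num ?b (Suc n)"
    using nz by (simp add: field_simps)
  also have "\<dots> = conv_num a (Suc (Suc n)) / conv_den a (Suc (Suc n))"
    by (simp only: conv_num_shift conv_den_shift[of a "Suc n"])
  finally show ?case .
qed simp

definition cf_gap :: "(nat \<Rightarrow> int) \<Rightarrow> nat \<Rightarrow> real" where
  "cf_gap a n = 1 / (conv_den a (Suc n) * conv_den a (Suc (Suc n)))"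

lemma cfrac_fin_step:
  assumes pos: "\<forall>i\<ge>1. a i \<ge> 1"
  shows "cfrac_fin a (Suc n) - cfrac_fin a n = (-1) ^ n * cf_gap a n"
proof -
  have q: "real_of_int (conv_den a (Suc n)) \<noteq> 0" "real_of_int (conv_den a (Suc (Suc n))) \<noteq> 0"
    using conv_den_pos(2)[OF pos] by (metis not_one_le_zero of_int_eq_0_iff)+
  have det: "real_of_int (conv_num a (Suc (Suc n)) * conv_den a (Suc n)
               - conv_num a (Suc n) * conv_den a (Suc (Suc n))) = (-1) ^ n"
    using conv_det[of a "Suc n"] by simp
  show ?thesis unfolding cfrac_fin_conv[OF pos] cf_gap_def using q det by (simp add: field_simps)
qed

lemma cf_gap_pos:
  assumes pos: "\<forall>i\<ge>1. a i \<ge> 1"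
  shows "0 < cf_gap a n"
  unfolding cf_gap_def using conv_den_pos(2)[OF pos, of n] conv_den_pos(2)[OF pos, of "Suc n"] by simp

lemma cf_gap_decreasing:
  assumes pos: "\<forall>i\<ge>1. a i \<ge> 1"
  shows "cf_gap a (Suc n) < cf_gap a n"
proof -
  have q1: "1 \<le> conv_den a (Suc n)" "1 \<le> conv_den a (Suc (Suc n))"
    using conv_den_pos(2)[OF pos] by blast+
  have "conv_den a (Suc n) < conv_den a (Suc (Suc (Suc n)))"
    using conv_den_grows[OF pos, of "Suc n"] q1 by linarith
  then have "conv_den a (Suc n) * conv_den a (Suc (Suc n))
               < conv_den a (Suc (Suc n)) * conv_den a (Suc (Suc (Suc n)))"
    using q1 by (simp add: mult.commute)
  then have "real_of_int (conv_den a (Suc n) * conv_den a (Suc (Suc n)))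
               < real_of_int (conv_den a (Suc (Suc n)) * conv_den a (Suc (Suc (Suc n))))"
    by linarith
  then show ?thesis unfolding cf_gap_def using q1
    by (intro divide_strict_left_mono) (auto simp del: of_int_mult)
qed

lemma cf_gap_tendsto_zero:
  assumes pos: "\<forall>i\<ge>1. a i \<ge> 1"
  shows "cf_gap a \<longlonglongrightarrow> 0"
proof (rule tendsto_sandwich[where f = "\<lambda>_. 0" and h = "\<lambda>n. 1 / (real n + 1)"])
  have "cf_gap a n \<le> 1 / (real n + 1)" for n
  proof -
    have "int n + 1 \<le> conv_den a (Suc (Suc n))" using conv_den_ge_index[OF pos, of "Suc n"] by simp
    also have "\<dots> \<le> conv_den a (Suc n) * conv_den a (Suc (Suc n))"
      using conv_den_pos(2)[OF pos, of n] conv_den_pos(2)[OF pos, of "Suc n"] by simp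
    finally have "real n + 1 \<le> real_of_int (conv_den a (Suc n) * conv_den a (Suc (Suc n)))"
      by linarith
    then show ?thesis unfolding cf_gap_def by (intro divide_left_mono) (auto simp del: of_int_mult)
  qed
  then show "eventually (\<lambda>n. cf_gap a n \<le> 1 / (real n + 1)) sequentially" by simp
  show "eventually (\<lambda>n. 0 \<le> cf_gap a n) sequentially"
    using cf_gap_pos[OF pos] by (simp add: less_imp_le)
  show "(\<lambda>n. 1 / (real n + 1)) \<longlonglongrightarrow> 0"
    using LIMSEQ_inverse_real_of_nat by (simp add: inverse_eq_divide add.commute)
qed simp

lemma cfrac_fin_partial_sum:
  assumes pos: "\<forall>i\<ge>1. a i \<ge> 1"
  shows "cfrac_fin a n = a 0 + (\<Sum>i<n. (-1) ^ i * cf_gap a i)"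
  by (induction n) (use cfrac_fin_step[OF pos] in \<open>auto simp: algebra_simps\<close>)

(* By the Leibniz criterion the convergents converge to cfrac_val a, with the even
   convergents strictly below and the odd ones strictly above the value. *)
lemma cfrac_interlacing:
  assumes pos: "\<forall>i\<ge>1. a i \<ge> 1"
  shows "cfrac_fin a \<longlonglongrightarrow> cfrac_val a"
    and "cfrac_fin a (2 * n) < cfrac_val a"
    and "cfrac_val a < cfrac_fin a (2 * n + 1)"
proof -
  have "0 \<le> cf_gap a m" "cf_gap a (Suc m) \<le> cf_gap a m" for m
    using cf_gap_pos[OF pos, of m] cf_gap_decreasing[OF pos, of m] by simp_all
  note leibniz = summable_Leibniz'[where a = "cf_gap a", OF cf_gap_tendsto_zero[OF pos] this]
  define L where "L = a 0 + (\<Sum>i. (-1) ^ i * cf_gap a i)"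
  have "(\<lambda>n. a 0 + (\<Sum>i<n. (-1) ^ i * cf_gap a i)) \<longlonglongrightarrow> L"
    unfolding L_def using summable_LIMSEQ[OF leibniz(1)] by (intro tendsto_add tendsto_const)
  moreover have "cfrac_fin a = (\<lambda>n. a 0 + (\<Sum>i<n. (-1) ^ i * cf_gap a i))"
    using cfrac_fin_partial_sum[OF pos] by blast
  ultimately have lim: "cfrac_fin a \<longlonglongrightarrow> L" by simp
  then have val: "cfrac_val a = L" unfolding cfrac_val_def by (rule limI)
  with lim show "cfrac_fin a \<longlonglongrightarrow> cfrac_val a" by simp
  have even: "cfrac_fin a (2 * m) \<le> L" and odd: "L \<le> cfrac_fin a (2 * m + 1)" for m
    unfolding L_def cfrac_fin_partial_sum[OF pos] using leibniz(2)[of m] leibniz(4)[of m] by simp_all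
  have "cfrac_fin a (2 * n) < cfrac_fin a (2 * Suc n)"
    using cfrac_fin_step[OF pos, of "2 * n"] cfrac_fin_step[OF pos, of "2 * n + 1"]
      cf_gap_decreasing[OF pos, of "2 * n"] by simp
  then show "cfrac_fin a (2 * n) < cfrac_val a" using even[of "Suc n"] val by simp
  have "cfrac_fin a (2 * Suc n + 1) < cfrac_fin a (2 * n + 1)"
    using cfrac_fin_step[OF pos, of "2 * n + 1"] cfrac_fin_step[OF pos, of "2 * n + 2"]
      cf_gap_decreasing[OF pos, of "2 * n + 1"] by simp
  then show "cfrac_val a < cfrac_fin a (2 * n + 1)" using odd[of "Suc n"] val by simp
qed

lemma odd_convergent_error:
  assumes pos: "\<forall>i\<ge>1. a i \<ge> 1" and k: "odd k"
  shows "0 < cfrac_fin a k - cfrac_val a" and "cfrac_fin a k - cfrac_val a < cf_gap a k"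
proof -
  obtain j where kj: "k = 2 * j + 1" using k oddE by blast
  show "0 < cfrac_fin a k - cfrac_val a" using cfrac_interlacing(3)[OF pos, of j] kj by simp
  have "cfrac_fin a (Suc k) < cfrac_val a" using cfrac_interlacing(2)[OF pos, of "Suc j"] kj by simp
  moreover have "cfrac_fin a (Suc k) - cfrac_fin a k = - cf_gap a k"
    using cfrac_fin_step[OF pos, of k] k by simp
  ultimately show "cfrac_fin a k - cfrac_val a < cf_gap a k" by linarith
qed

lemma cfrac_val_cons:
  assumes pos: "\<forall>i\<ge>1. a i \<ge> 1"
  shows "cfrac_val a = a 0 + 1 / cfrac_val (\<lambda>i. a (Suc i))"
proof -
  let ?b = "\<lambda>i. a (Suc i)"
  have posb: "\<forall>i\<ge>1. ?b i \<ge> 1" using pos by auto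
  have "a 1 < cfrac_val ?b" using cfrac_interlacing(2)[OF posb, of 0] by simp
  then have nz: "cfrac_val ?b \<noteq> 0" using pos[rule_format, of 1] by linarith
  have "(\<lambda>n. cfrac_fin a (Suc n)) \<longlonglongrightarrow> cfrac_val a"
    using cfrac_interlacing(1)[OF pos] by (rule LIMSEQ_Suc)
  moreover have "(\<lambda>n. cfrac_fin a (Suc n)) \<longlonglongrightarrow> a 0 + 1 / cfrac_val ?b"
    using cfrac_interlacing(1)[OF posb] nz by (auto intro!: tendsto_add tendsto_divide)
  ultimately show ?thesis by (rule LIMSEQ_unique)
qed

lemma conv_num_parity:
  assumes ev: "\<forall>i. even (a (2 * i))"
  shows "even (conv_num a (2 * j + 1)) \<and> odd (conv_num a (2 * j + 2))"
proof (induction j)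
  case 0
  then show ?case using ev[rule_format, of 0] by (simp add: conv_num.simps(3))
next
  case (Suc j)
  have "even (conv_num a (2 * Suc j + 1))"
    using Suc ev[rule_format, of "Suc j"] conv_num.simps(3)[of a "2 * j + 1"] by simp
  moreover have "odd (conv_num a (2 * Suc j + 2))"
    using Suc calculation conv_num.simps(3)[of a "2 * j + 2"] by simp
  ultimately show ?case ..
qed

(* A quartic upper bound for exp on [0, 1/2], from the Lagrange remainder. *)
lemma exp_le_quartic:
  fixes x :: real assumes "0 \<le> x" "x \<le> 1/2"
  shows "exp x \<le> 1 + x + x^2/2 + x^3/6 + x^4/12"
proof -
  obtain t where t: "\<bar>t\<bar> \<le> \<bar>x\<bar>" "exp x = (\<Sum>m<4. x ^ m / fact m) + exp t / fact 4 * x ^ 4"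
    using Maclaurin_exp_le[of x 4] by blast
  have "exp t \<le> exp (1/2)" using t(1) assms by simp
  also have "\<dots> \<le> 2" by (rule exp_half_le2)
  finally have "exp t / fact 4 * x ^ 4 \<le> 2 / 24 * x ^ 4"
    by (intro mult_right_mono) (auto simp: fact_numeral)
  moreover have "(\<Sum>m<4. x ^ m / fact m) = 1 + x + x^2/2 + x^3/6"
    by (simp add: eval_nat_numeral fact_numeral)
  ultimately show ?thesis using t(2) by simp
qed

lemma inverse_exp_minus_one_lower:
  fixes x :: real assumes x: "0 < x" "x \<le> 1/2"
  shows "1/x - 1/2 + x/32 \<le> 1 / (exp x - 1)"
proof -
  have pos: "1 - x/2 + x^2/32 > 0" using x zero_le_power2[of x] by linarith
  have "(1 + x + x^2/2 + x^3/6 + x^4/12) * (1 - x/2 + x^2/32) - (1 + x/2 + x^2/32)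
          = x^3 * (-(5/96) + x/64 - 7*x^2/192 + x^3/384)"
    by (simp add: eval_nat_numeral algebra_simps)
  also have "\<dots> \<le> 0"
  proof (rule mult_nonneg_nonpos)
    have "x^3 \<le> 1/8" using x power_mono[of x "1/2" 3] by (simp add: power_numeral_reduce)
    then show "-(5/96) + x/64 - 7*x^2/192 + x^3/384 \<le> 0" using x zero_le_power2[of x] by linarith
  qed (use x in simp)
  finally have "exp x * (1 - x/2 + x^2/32) \<le> 1 + x/2 + x^2/32"
    using mult_right_mono[OF exp_le_quartic[OF less_imp_le[OF x(1)] x(2)] less_imp_le[OF pos]]
    by linarith
  then have "(1 - x/2 + x^2/32) * (exp x - 1) \<le> x" by (simp add: algebra_simps diff_divide_distrib)
  then have "(1 - x/2 + x^2/32) / x \<le> 1 / (exp x - 1)"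
    using x by (simp add: field_simps)
  moreover have "(1 - x/2 + x^2/32) / x = 1/x - 1/2 + x/32"
    using x by (simp add: field_simps power2_eq_square)
  ultimately show ?thesis by simp
qed

lemma A_set_memberI:
  fixes L \<delta> :: real and m :: int and n :: nat
  assumes L: "0 < L" "L \<le> 1/2" and nL: "4 \<le> n * L"
    and \<delta>: "0 < \<delta>" "\<delta> < 1 / (4 * n)" and eq: "n * L = 2 * m + 1 - \<delta>"
  shows "n \<in> A_set (exp (2 / L))"
proof -
  have "real n * L \<le> real n * (1/2)" using L(2) by (rule mult_left_mono) simp
  then have n: "real n \<ge> 8" using nL by linarith
  define x where "x = 2 / (n * L)"
  have x: "0 < x" "x \<le> 1/2" using nL L n unfolding x_def by (auto simp: field_simps)
  have "exp (2 / L) powr (1 / real n) = exp x" unfolding powr_def x_def by simp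
  then have M: "Mprime (exp (2 / L)) n = \<lfloor>1 / (exp x - 1)\<rfloor>" unfolding Mprime_def by simp
  have "1/x = n * L / 2" "x/32 = 1 / (16 * (n * L))" unfolding x_def by simp_all
  moreover have "\<delta>/2 < 1 / (16 * (n * L))"
  proof -
    have "\<delta>/2 < 1 / (8 * n)" using \<delta> n by (simp add: field_simps)
    also have "\<dots> \<le> 1 / (16 * (n * L))" using L n by (intro divide_left_mono) auto
    finally show ?thesis .
  qed
  ultimately have "m \<le> 1 / (exp x - 1)"
    using inverse_exp_minus_one_lower[OF x] eq by (simp add: algebra_simps)
  then have "m \<le> Mprime (exp (2 / L)) n" unfolding M by (simp add: le_floor_iff)
  moreover have "\<lfloor>real n / ln (exp (2 / L)) - 1/2\<rfloor> = m - 1"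
  proof (rule floor_unique)
    have "1 / (4 * real n) < 1" using n by simp
    then have "\<delta> < 1" using \<delta> by linarith
    moreover have "real n / ln (exp (2 / L)) - 1/2 = m - \<delta>/2" using eq L by (simp add: field_simps)
    ultimately show "of_int (m - 1) \<le> real n / ln (exp (2 / L)) - 1/2"
      and "real n / ln (exp (2 / L)) - 1/2 < of_int (m - 1) + 1" using \<delta> by simp_all
  qed
  ultimately show ?thesis unfolding A_set_def using n by auto
qed

lemma paper_sequence_pos:
  fixes a :: "nat \<Rightarrow> int"
  assumes a1: "a 1 = 2" and ev: "\<forall>k\<ge>1. a (2*k) = 4" and od: "\<forall>k\<ge>1. a (2*k+1) > 0"
  shows "\<forall>i\<ge>1. a i \<ge> 1"
proof (intro allI impI)
  fix i :: nat assume i: "1 \<le> i"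
  show "1 \<le> a i"
  proof (cases "even i")
    case True
    then obtain k where "i = 2 * k" by blast
    then show ?thesis using i ev by auto
  next
    case False
    then obtain k where "i = 2 * k + 1" by (blast elim: oddE)
    show ?thesis
    proof (cases "k = 0")
      case True then show ?thesis using \<open>i = 2 * k + 1\<close> a1 by simp
    next
      case False then show ?thesis using \<open>i = 2 * k + 1\<close> od[rule_format, of k] by simp
    qed
  qed
qed

(* The value lies strictly between the convergents [0; 2, 4] = 4/9 and [0; 2] = 1/2. *)
lemma paper_value_bounds:
  fixes a :: "nat \<Rightarrow> int"
  assumes a0: "a 0 = 0" and a1: "a 1 = 2" and a2: "a 2 = 4" and pos: "\<forall>i\<ge>1. a i \<ge> 1"
  shows "4/9 < cfrac_val a" and "cfrac_val a < 1/2"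
proof -
  have "cfrac_fin a 1 = 1/2" using a0 a1 by simp
  then show "cfrac_val a < 1/2" using cfrac_interlacing(3)[OF pos, of 0] by simp
  have "cfrac_fin a 2 = 4/9" using a0 a1 a2 by (simp add: numeral_2_eq_2)
  then show "4/9 < cfrac_val a" using cfrac_interlacing(2)[OF pos, of 1] by simp
qed

lemma A_set_contains_denominator:
  fixes a :: "nat \<Rightarrow> int"
  assumes a0: "a 0 = 0" and a1: "a 1 = 2" and ev: "\<forall>k\<ge>1. a (2*k) = 4"
    and od: "\<forall>k\<ge>1. a (2*k+1) > 0" and j: "j \<ge> 4"
  shows "nat (conv_den a (2 * j + 2)) \<in> A_set (exp (2 / cfrac_val a))"
proof -
  have pos: "\<forall>i\<ge>1. a i \<ge> 1" by (rule paper_sequence_pos[OF a1 ev od])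
  define L where "L = cfrac_val a"
  define k where "k = 2 * j + 1"
  define q where "q = conv_den a (Suc k)"
  have even_entries: "\<forall>i. even (a (2 * i))"
  proof
    fix i :: nat show "even (a (2 * i))" using a0 ev[rule_format, of i] by (cases "i = 0") auto
  qed
  have "odd (conv_num a (Suc k))" using conv_num_parity[OF even_entries, of j] unfolding k_def by simp
  then obtain m where p: "conv_num a (Suc k) = 2 * m + 1" by (rule oddE)
  have q9: "9 \<le> q" using conv_den_ge_index[OF pos, of k] j unfolding q_def k_def by simp
  have L: "4/9 < L" "L < 1/2" unfolding L_def using paper_value_bounds[OF a0 a1 _ pos] ev by auto
  define \<delta> where "\<delta> = q * (cfrac_fin a k - L)"
  have "odd k" unfolding k_def by simp
  note err = odd_convergent_error[OF pos this, folded L_def]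
  have \<delta>_pos: "0 < \<delta>" unfolding \<delta>_def using err(1) q9 by simp
  have "\<delta> < q * cf_gap a k" unfolding \<delta>_def using err(2) q9 by simp
  also have "\<dots> = 1 / conv_den a (Suc (Suc k))" unfolding cf_gap_def q_def[symmetric] using q9 by simp
  also have "\<dots> < 1 / (4 * q)"
  proof -
    have "a (Suc k) = 4" using ev[rule_format, of "Suc j"] unfolding k_def by simp
    then have "conv_den a (Suc (Suc k)) = 4 * q + conv_den a k"
      unfolding q_def by (simp add: conv_den.simps(3))
    moreover have "1 \<le> conv_den a k" using conv_den_pos(2)[OF pos, of "2 * j"] unfolding k_def by simp
    ultimately show ?thesis using q9 by (intro divide_strict_left_mono) auto
  qed
  finally have \<delta>_small: "\<delta> < 1 / (4 * q)" .
  have "cfrac_fin a k = (2 * m + 1) / q" using cfrac_fin_conv[OF pos, of k] p q_def by simp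
  then have eq: "q * L = 2 * m + 1 - \<delta>" unfolding \<delta>_def using q9 by (simp add: field_simps)
  have "4 \<le> q * L" using mult_mono[of 9 "real_of_int q" "4/9" L] q9 L by simp
  moreover have "real (nat q) = q" using q9 by simp
  ultimately have "nat q \<in> A_set (exp (2 / L))"
    using A_set_memberI[of L "nat q" \<delta> m] L \<delta>_pos \<delta>_small eq by simp
  then show ?thesis unfolding L_def q_def k_def by simp
qed

lemma A_set_infinite:
  fixes a :: "nat \<Rightarrow> int"
  assumes a0: "a 0 = 0" and a1: "a 1 = 2" and ev: "\<forall>k\<ge>1. a (2*k) = 4"
    and od: "\<forall>k\<ge>1. a (2*k+1) > 0"
  shows "infinite (A_set (exp (2 / cfrac_val a)))"
  unfolding infinite_nat_iff_unbounded_le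
proof
  fix N :: nat
  have pos: "\<forall>i\<ge>1. a i \<ge> 1" by (rule paper_sequence_pos[OF a1 ev od])
  let ?n = "nat (conv_den a (2 * (N + 4) + 2))"
  have "int N \<le> int (2 * (N + 4) + 1)" by simp
  also have "\<dots> \<le> conv_den a (2 * (N + 4) + 2)"
    using conv_den_ge_index[OF pos, of "2 * (N + 4) + 1"] by simp
  finally have "int N \<le> conv_den a (2 * (N + 4) + 2)" .
  then have "N \<le> ?n" using nat_mono by fastforce
  moreover have "?n \<in> A_set (exp (2 / cfrac_val a))"
    by (rule A_set_contains_denominator[OF a0 a1 ev od]) simp
  ultimately show "\<exists>n\<ge>N. n \<in> A_set (exp (2 / cfrac_val a))" by blast
qed

(* Solving the fixed-point equation Y = [4; c, Y] of the periodic tail. *)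
lemma quadratic_fixed_point:
  fixes c Y :: real
  assumes c: "c > 0" and Y: "Y > 0" and fixed: "Y = 4 + 1 / (c + 1 / Y)"
  shows "2 / Y = sqrt (c * (c + 1)) - c"
proof -
  define t where "t = 2 / Y"
  have "1 / (c + 1 / Y) = Y / (c * Y + 1)" using Y by (simp add: field_simps)
  then have "Y - 4 = Y / (c * Y + 1)" using fixed by simp
  moreover have "c * Y + 1 > 0" using c Y by (simp add: add_pos_pos)
  ultimately have "(Y - 4) * (c * Y + 1) = Y" by (simp add: field_simps)
  then have "c * Y^2 = 4 * c * Y + 4" by (simp add: algebra_simps power2_eq_square)
  then have "c = 2 * c * t + t^2" unfolding t_def using Y by (simp add: field_simps power2_eq_square)
  then have "(t + c)^2 = c * (c + 1)" by (simp add: algebra_simps power2_eq_square)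
  moreover have "0 \<le> t + c" unfolding t_def using c Y by simp
  ultimately show ?thesis unfolding t_def[symmetric] by (simp add: real_sqrt_unique)
qed

lemma periodic_cfrac_value:
  fixes c :: nat
  assumes c: "c > 0"
  defines "a \<equiv> \<lambda>i. if i = 0 then 0 else if i = 1 then 2 else if even i then 4 else int c"
  shows "2 / cfrac_val a = 4 - real c + sqrt (real c * (real c + 1))"
proof -
  define y :: "nat \<Rightarrow> int" where "y = (\<lambda>i. if even i then 4 else int c)"
  have pos_y: "\<forall>i\<ge>1. y i \<ge> 1" and pos_y': "\<forall>i\<ge>1. y (Suc i) \<ge> 1"
    and pos_a: "\<forall>i\<ge>1. a i \<ge> 1" and pos_a': "\<forall>i\<ge>1. a (Suc i) \<ge> 1"
    using c by (simp_all add: y_def a_def)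
  have "(\<lambda>i. a (Suc (Suc i))) = y" "(\<lambda>i. y (Suc (Suc i))) = y" by (auto simp: a_def y_def)
  then have val_a: "cfrac_val a = 1 / (2 + 1 / cfrac_val y)"
    and val_y: "cfrac_val y = 4 + 1 / (real c + 1 / cfrac_val y)"
    using cfrac_val_cons[OF pos_a] cfrac_val_cons[OF pos_a'] cfrac_val_cons[OF pos_y]
      cfrac_val_cons[OF pos_y'] by (simp_all add: a_def y_def)
  have "y 0 < cfrac_val y" using cfrac_interlacing(2)[OF pos_y, of 0] by simp
  then have Y: "4 < cfrac_val y" by (simp add: y_def)
  have "2 / cfrac_val a = 4 + 2 / cfrac_val y" unfolding val_a using Y by (simp add: field_simps)
  also have "2 / cfrac_val y = sqrt (real c * (real c + 1)) - real c"
    using quadratic_fixed_point[OF _ _ val_y] c Y by simp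
  finally show ?thesis by simp
qed

theorem theorem6:
  shows "(\<forall>a :: nat \<Rightarrow> int.
            a 0 = 0 \<longrightarrow> a 1 = 2 \<longrightarrow> (\<forall>k\<ge>1. a (2*k) = 4) \<longrightarrow>
            (\<forall>k\<ge>1. a (2*k+1) > 0) \<longrightarrow>
            infinite (A_set (exp (2 / cfrac_val a))))
       \<and> (\<forall>c :: nat. c > 0 \<longrightarrow>
            infinite (A_set (exp (4 - real c + sqrt (real c * (real c + 1))))))"
proof (intro conjI allI impI)
  show "infinite (A_set (exp (2 / cfrac_val a)))"
    if "a 0 = 0" "a 1 = 2" "\<forall>k\<ge>1. a (2*k) = 4" "\<forall>k\<ge>1. a (2*k+1) > 0" for a :: "nat \<Rightarrow> int"
    using A_set_infinite that by blast
next
  fix c :: nat assume c: "c > 0"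
  define a :: "nat \<Rightarrow> int" where
    "a = (\<lambda>i. if i = 0 then 0 else if i = 1 then 2 else if even i then 4 else int c)"
  have "infinite (A_set (exp (2 / cfrac_val a)))"
    by (rule A_set_infinite) (use c in \<open>simp_all add: a_def\<close>)
  then show "infinite (A_set (exp (4 - real c + sqrt (real c * (real c + 1)))))"
    using periodic_cfrac_value[OF c] unfolding a_def by simp
qed

end
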